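(* A locally compact Hausdorff space $X$ has the universal fixed point property if and only if it has the fixed point property with respect to the space $C(X,X)$.
   Context: $C(X,X)$ is the set of continuous self-maps of $X$ with the compact-open topology (generated by the sets $\{g\mid g(K)\subseteq U\}$, $K\subseteq X$ compact, $U\subseteq X$ open). A space $X$ has the fixed point property with respect to a topological space $T$ if for every continuous map $f\colon T\times X\to X$ there exists a continuous map $p\colon T\to X$ with $f(t,p(t))=p(t)$ for all $t\in T$. It has the universal fixed point property if it has the fixed point property with respect to every topological space $T$. *)

theory Defs
  imports "HOL-Analysis.Analysis"
begin

text \<open>Maps are represented as
  extensional functions (value undefined outside the topspace), so that each
  continuous self-map corresponds to exactly one HOL function.\<close>
definition cmaps :: "'a topology \<Rightarrow> ('a \<Rightarrow> 'a) set" where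
  "cmaps X = {g. continuous_map X X g \<and> g \<in> extensional (topspace X)}"

definition compact_open_topology :: "'a topology \<Rightarrow> ('a \<Rightarrow> 'a) topology" where
  "compact_open_topology X =
     topology_generated_by
       {{g \<in> cmaps X. g ` K \<subseteq> U} | K U. compactin X K \<and> openin X U}"

definition fpp_wrt :: "'b topology \<Rightarrow> 'a topology \<Rightarrow> bool" where
  "fpp_wrt T X \<longleftrightarrow>
     (\<forall>f. continuous_map (prod_topology T X) X f \<longrightarrow>
        (\<exists>p. continuous_map T X p \<and> (\<forall>t\<in>topspace T. f (t, p t) = p t)))"

end

theory Submission
  imports Defs
begin

text \<open>For locally compact Hausdorff X, evaluation C(X,X) \<times> X \<rightarrow> X is continuous in the
  compact-open topology, and every continuous f : T \<times> X \<rightarrow> X curries to a continuous map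
  t \<mapsto> f(t,-) from T to C(X,X). So f is the pullback of evaluation along this map, and a
  continuous fixed point selection p for evaluation gives the selection p \<circ> (t \<mapsto> f(t,-))
  for f. The converse is the special case T = C(X,X).\<close>

lemma topspace_compact_open_topology [simp]:
  "topspace (compact_open_topology X) = cmaps X"
  unfolding compact_open_topology_def topology_generated_by_topspace by auto

lemma openin_compact_open_topology:
  "compactin X K \<Longrightarrow> openin X U \<Longrightarrow>
     openin (compact_open_topology X) {g \<in> cmaps X. g ` K \<subseteq> U}"
  unfolding compact_open_topology_def by (rule topology_generated_by_Basis) blast

lemma continuous_map_eval_compact_open:
  assumes nbhd: "neighbourhood_base_of (compactin X) X"
  shows "continuous_map (prod_topology (compact_open_topology X) X) X (\<lambda>(g, x). g x)"
    (is "continuous_map ?P X ?ev")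
proof -
  have "openin ?P {z \<in> topspace ?P. ?ev z \<in> U}" if U: "openin X U" for U
  proof (subst openin_subopen, intro ballI)
    fix z assume z: "z \<in> {z \<in> topspace ?P. ?ev z \<in> U}"
    obtain g x where z_eq: "z = (g, x)"
      by (cases z)
    with z have g: "g \<in> cmaps X" and x: "x \<in> topspace X" and gx: "g x \<in> U"
      by simp_all
    have "openin X {y \<in> topspace X. g y \<in> U}"
      using g U by (simp add: cmaps_def continuous_map)
    moreover have "x \<in> {y \<in> topspace X. g y \<in> U}"
      using x gx by simp
    ultimately obtain V K where V: "openin X V" and K: "compactin X K" and "x \<in> V" "V \<subseteq> K"
      and K_sub: "K \<subseteq> {y \<in> topspace X. g y \<in> U}"
      using nbhd unfolding neighbourhood_base_of by meson
    let ?N = "{h \<in> cmaps X. h ` K \<subseteq> U} \<times> V"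
    have "openin ?P ?N"
      using openin_compact_open_topology[OF K U] V by (simp add: openin_prod_Times_iff)
    moreover have "z \<in> ?N"
      using z_eq g K_sub \<open>x \<in> V\<close> by auto
    moreover have "?N \<subseteq> {z \<in> topspace ?P. ?ev z \<in> U}"
      using openin_subset[OF V] \<open>V \<subseteq> K\<close> by auto
    ultimately show "\<exists>N. openin ?P N \<and> z \<in> N \<and> N \<subseteq> {z \<in> topspace ?P. ?ev z \<in> U}"
      by blast
  qed
  moreover have "?ev ` topspace ?P \<subseteq> topspace X"
    by (auto simp: cmaps_def dest: continuous_map_image_subset_topspace)
  ultimately show ?thesis
    by (simp add: continuous_map)
qed

lemma continuous_map_curry_compact_open:
  assumes f: "continuous_map (prod_topology T X) X f"
  shows "continuous_map T (compact_open_topology X) (\<lambda>t. restrict (\<lambda>x. f (t, x)) (topspace X))"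
    (is "continuous_map T _ ?c")
proof -
  have c_cmaps: "?c t \<in> cmaps X" if t: "t \<in> topspace T" for t
  proof -
    have "continuous_map X (prod_topology T X) (\<lambda>x. (t, x))"
      using t by (intro continuous_map_pairedI) simp_all
    from continuous_map_compose[OF this f]
    have "continuous_map X X (\<lambda>x. f (t, x))"
      by (simp add: o_def)
    then have "continuous_map X X (?c t)"
      by (rule continuous_map_eq) auto
    then show ?thesis
      by (simp add: cmaps_def)
  qed
  show ?thesis
    unfolding compact_open_topology_def
  proof (rule continuous_on_generated_topo)
    have "cmaps X = {g \<in> cmaps X. g ` {} \<subseteq> topspace X}"
      by simp
    then have "cmaps X \<in> {{g \<in> cmaps X. g ` K \<subseteq> U} | K U. compactin X K \<and> openin X U}"
      by blast
    then show "?c ` topspace T \<subseteq> \<Union>{{g \<in> cmaps X. g ` K \<subseteq> U} | K U. compactin X K \<and> openin X U}"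
      using c_cmaps by blast
  next
    fix S assume "S \<in> {{g \<in> cmaps X. g ` K \<subseteq> U} | K U. compactin X K \<and> openin X U}"
    then obtain K U where S: "S = {g \<in> cmaps X. g ` K \<subseteq> U}"
      and K: "compactin X K" and U: "openin X U"
      by blast
    have KX: "K \<subseteq> topspace X"
      using K compactin_subset_topspace by blast
    have preimage: "?c -` S \<inter> topspace T = {t \<in> topspace T. \<forall>x\<in>K. f (t, x) \<in> U}"
      using KX c_cmaps unfolding S by auto
    have W: "openin (prod_topology T X) {z \<in> topspace (prod_topology T X). f z \<in> U}"
      using f U by (simp add: continuous_map)
    show "openin T (?c -` S \<inter> topspace T)"
      unfolding preimage
    proof (subst openin_subopen, intro ballI)
      fix t assume t: "t \<in> {t \<in> topspace T. \<forall>x\<in>K. f (t, x) \<in> U}"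
      then have "{t} \<times> K \<subseteq> {z \<in> topspace (prod_topology T X). f z \<in> U}"
        using KX by auto
      then obtain A B where A: "openin T A" "t \<in> A" and "K \<subseteq> B"
        and AB: "A \<times> B \<subseteq> {z \<in> topspace (prod_topology T X). f z \<in> U}"
        using tube_lemma_right[OF W K, of t] t by auto
      then have "A \<subseteq> {t \<in> topspace T. \<forall>x\<in>K. f (t, x) \<in> U}"
        using openin_subset[OF \<open>openin T A\<close>] by blast
      then show "\<exists>A. openin T A \<and> t \<in> A \<and> A \<subseteq> {t \<in> topspace T. \<forall>x\<in>K. f (t, x) \<in> U}"
        using A by blast
    qed
  qed
qed

lemma fixed_point_selection_pullback:
  assumes fpp: "fpp_wrt S X"
    and F: "continuous_map (prod_topology S X) X F"
    and \<phi>: "continuous_map T S \<phi>"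
    and f: "\<And>t x. t \<in> topspace T \<Longrightarrow> x \<in> topspace X \<Longrightarrow> f (t, x) = F (\<phi> t, x)"
  shows "\<exists>p. continuous_map T X p \<and> (\<forall>t\<in>topspace T. f (t, p t) = p t)"
proof -
  obtain q where q: "continuous_map S X q" and q_fix: "\<forall>s\<in>topspace S. F (s, q s) = q s"
    using fpp F unfolding fpp_wrt_def by blast
  have "continuous_map T X (q \<circ> \<phi>)"
    using \<phi> q by (rule continuous_map_compose)
  moreover have "f (t, (q \<circ> \<phi>) t) = (q \<circ> \<phi>) t" if t: "t \<in> topspace T" for t
  proof -
    have "\<phi> t \<in> topspace S" and "q (\<phi> t) \<in> topspace X"
      using t \<phi> q by (auto simp: continuous_map_def)
    then show ?thesis
      using t f q_fix by simp
  qed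
  ultimately show ?thesis
    by blast
qed

theorem corollary7p4:
  fixes X :: "'a topology"
  assumes "locally_compact_space X" and "Hausdorff_space X"
  shows "(fpp_wrt (compact_open_topology X) X \<longrightarrow> (\<forall>T :: 'b topology. fpp_wrt T X))
       \<and> ((\<forall>T :: ('a \<Rightarrow> 'a) topology. fpp_wrt T X) \<longrightarrow> fpp_wrt (compact_open_topology X) X)"
proof (intro conjI impI allI)
  fix T :: "'b topology"
  assume fpp: "fpp_wrt (compact_open_topology X) X"
  have eval: "continuous_map (prod_topology (compact_open_topology X) X) X (\<lambda>(g, x). g x)"
    using assms locally_compact_space_neighbourhood_base continuous_map_eval_compact_open
    by blast
  show "fpp_wrt T X"
    unfolding fpp_wrt_def
  proof (intro allI impI)
    fix f assume "continuous_map (prod_topology T X) X f"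
    from fixed_point_selection_pullback[OF fpp eval continuous_map_curry_compact_open[OF this]]
    show "\<exists>p. continuous_map T X p \<and> (\<forall>t\<in>topspace T. f (t, p t) = p t)"
      by simp
  qed
qed blast

end
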